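(* Let $A,B\subseteq\mathbb N$ satisfy condition $( * )$. Then for every infinite set $X\subseteq D_A$, every function $f:X\to D_B$, and every $n>1$, there are distinct $x,y\in X$ such that either $d_3(f(x),f(y))/d_3(x,y)>n$ or $d_3(f(x),f(y))/d_3(x,y)<1/n$.
   Context: $2^{\mathbb N}$ is the set of infinite binary sequences. For distinct $\eta,\nu\in 2^{\mathbb N}$ let $\Delta(\eta,\nu)$ be the least $m$ with $\eta(m)\ne\nu(m)$, and $d_3(\eta,\nu)=3^{-\Delta(\eta,\nu)}$ ($d_3(\eta,\eta)=0$). For infinite $A\subseteq\mathbb N$, $T_A\subseteq 2^{<\mathbb N}$ is the tree defined inductively: it contains the empty sequence, and for each $\eta\in T_A$ it contains both $\eta^\frown 0$ and $\eta^\frown 1$ if the length $|\eta|\in A$, and only $\eta^\frown 0$ if $|\eta|\notin A$. $D_A\subseteq 2^{\mathbb N}$ is the set of infinite branches of $T_A$, with metric $d_3$. Condition $( * )$ for $A,B\subseteq\mathbb N$: $|A|=|B|=\aleph_0$ and for every $n$ there is $k$ such that for all $a\in A$, $b\in B$ with $a,b>k$, either $a/b>n$ or $b/a>n$. *)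

theory Defs
  imports "HOL-Analysis.Analysis"
begin

text \<open>Infinite binary sequences are modelled as functions nat => bool (False = 0, True = 1);
finite binary sequences as lists of bool.\<close>

definition Delta :: "(nat \<Rightarrow> bool) \<Rightarrow> (nat \<Rightarrow> bool) \<Rightarrow> nat" where
  "Delta \<eta> \<nu> = (LEAST m. \<eta> m \<noteq> \<nu> m)"

definition d3 :: "(nat \<Rightarrow> bool) \<Rightarrow> (nat \<Rightarrow> bool) \<Rightarrow> real" where
  "d3 \<eta> \<nu> = (if \<eta> = \<nu> then 0 else (1/3) ^ Delta \<eta> \<nu>)"

inductive_set T :: "nat set \<Rightarrow> bool list set" for A :: "nat set" where
  T_Nil: "[] \<in> T A"
| T_zero: "\<eta> \<in> T A \<Longrightarrow> \<eta> @ [False] \<in> T A"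
| T_one: "\<eta> \<in> T A \<Longrightarrow> length \<eta> \<in> A \<Longrightarrow> \<eta> @ [True] \<in> T A"

definition D :: "nat set \<Rightarrow> (nat \<Rightarrow> bool) set" where
  "D A = {\<eta>. \<forall>k. map \<eta> [0..<k] \<in> T A}"

definition cond_star :: "nat set \<Rightarrow> nat set \<Rightarrow> bool" where
  "cond_star A B \<longleftrightarrow> infinite A \<and> infinite B \<and>
     (\<forall>n::nat. \<exists>k::nat. \<forall>a\<in>A. \<forall>b\<in>B. a > k \<and> b > k \<longrightarrow>
        real a / real b > real n \<or> real b / real a > real n)"

end

theory Submission
  imports Defs
begin

text \<open>Apply condition (*) with ratio 2: beyond some level k, any a \<in> A and b \<in> B satisfy
a > 2b or b > 2a. As X is infinite and there are only finitely many prefixes of length K, two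
distinct x, y \<in> X agree below K, and so do f x and f y. If f x = f y the ratio is 0. Otherwise
\<Delta>(x,y) \<in> A and \<Delta>(f x, f y) \<in> B are both at least K > k, hence differ by more than K, so the
ratio d3(f x, f y) / d3(x, y) = 3^(\<Delta>(x,y) - \<Delta>(f x, f y)) is above 3^K or below 3^-K;
choose K with 3^K > n.\<close>

lemma Delta_differs:
  assumes "x \<noteq> y"
  shows "x (Delta x y) \<noteq> y (Delta x y)"
proof -
  from assms obtain m where "x m \<noteq> y m" by blast
  then show ?thesis unfolding Delta_def by (rule LeastI)
qed

lemma Delta_ge:
  assumes "x \<noteq> y" "\<forall>i<K. x i = y i"
  shows "K \<le> Delta x y"
  using assms Delta_differs[OF assms(1)] by (meson not_le)

lemma d3_eq_power:
  assumes "x \<noteq> y"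
  shows "d3 x y = 1 / 3 ^ Delta x y"
  using assms unfolding d3_def by (simp add: power_one_over)

lemma True_in_T_imp_in:
  assumes "xs @ [True] \<in> T A"
  shows "length xs \<in> A"
  using assms by (cases rule: T.cases) auto

lemma D_True_imp_in:
  assumes "\<eta> \<in> D A" "\<eta> m"
  shows "m \<in> A"
proof -
  have "map \<eta> [0..<Suc m] \<in> T A" using assms(1) unfolding D_def by blast
  then have "map \<eta> [0..<m] @ [True] \<in> T A" using assms(2) by simp
  then show ?thesis using True_in_T_imp_in by fastforce
qed

lemma Delta_in_set:
  assumes "x \<in> D A" "y \<in> D A" "x \<noteq> y"
  shows "Delta x y \<in> A"
  using Delta_differs[OF assms(3)] D_True_imp_in[OF assms(1)] D_True_imp_in[OF assms(2)]
  by blast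

lemma cond_star_ratio_two:
  assumes "cond_star A B"
  obtains k where "\<And>a b. a \<in> A \<Longrightarrow> b \<in> B \<Longrightarrow> k < a \<Longrightarrow> k < b \<Longrightarrow> 2 * b < a \<or> 2 * a < b"
proof -
  from assms obtain k where k: "\<forall>a\<in>A. \<forall>b\<in>B. a > k \<and> b > k \<longrightarrow>
      real a / real b > real (2::nat) \<or> real b / real a > real (2::nat)"
    unfolding cond_star_def by blast
  show thesis
  proof
    fix a b assume "a \<in> A" "b \<in> B" "k < a" "k < b"
    with k have "real a / real b > 2 \<or> real b / real a > 2" by fastforce
    with \<open>k < a\<close> \<open>k < b\<close> show "2 * b < a \<or> 2 * a < b"
      by (auto simp: field_simps)
  qed
qed

lemma infinite_two_agree_below:
  fixes X :: "(nat \<Rightarrow> 'a::finite) set" and f :: "(nat \<Rightarrow> 'a) \<Rightarrow> (nat \<Rightarrow> 'b::finite)"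
  assumes "infinite X"
  shows "\<exists>x\<in>X. \<exists>y\<in>X. x \<noteq> y \<and> (\<forall>i<K. x i = y i \<and> f x i = f y i)"
proof -
  define prefixes where "prefixes = (\<lambda>x. (map x [0..<K], map (f x) [0..<K]))"
  have "prefixes ` X \<subseteq> {xs. length xs = K} \<times> {ys. length ys = K}"
    unfolding prefixes_def by auto
  then have "finite (prefixes ` X)"
    by (rule finite_subset) (simp add: finite_list_length)
  with assms have "\<not> inj_on prefixes X" using finite_imageD by blast
  then obtain x y where "x \<in> X" "y \<in> X" "x \<noteq> y" "prefixes x = prefixes y"
    unfolding inj_on_def by blast
  moreover from \<open>prefixes x = prefixes y\<close> have "\<forall>i<K. x i = y i \<and> f x i = f y i"
    unfolding prefixes_def by (simp add: map_eq_conv)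
  ultimately show ?thesis by blast
qed

lemma power_quotient_gt:
  fixes c n :: real
  assumes "1 \<le> c" "n < c ^ N" "N + b \<le> a"
  shows "n < c ^ a / c ^ b"
proof -
  have "c ^ a / c ^ b = c ^ (a - b)"
    using assms(1,3) by (simp add: power_diff)
  moreover have "c ^ N \<le> c ^ (a - b)"
    using assms(1,3) by (intro power_increasing) auto
  ultimately show ?thesis using assms(2) by simp
qed

lemma d3_quotient_far_from_one:
  assumes "x \<noteq> y" "u \<noteq> v" "0 < n" "n < 3 ^ N"
    and "N + Delta u v \<le> Delta x y \<or> N + Delta x y \<le> Delta u v"
  shows "d3 u v / d3 x y > n \<or> d3 u v / d3 x y < 1 / n"
proof -
  have quotient: "d3 u v / d3 x y = 3 ^ Delta x y / 3 ^ Delta u v"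
    using assms(1,2) by (simp add: d3_eq_power)
  from assms(5) show ?thesis
  proof
    assume "N + Delta u v \<le> Delta x y"
    then show ?thesis unfolding quotient using power_quotient_gt[OF _ assms(4)] by simp
  next
    assume "N + Delta x y \<le> Delta u v"
    then have "n < 3 ^ Delta u v / 3 ^ Delta x y"
      using power_quotient_gt[OF _ assms(4)] by simp
    then have "1 / (3 ^ Delta u v / 3 ^ Delta x y) < 1 / n"
      using assms(3) by (intro divide_strict_left_mono) auto
    then show ?thesis unfolding quotient by simp
  qed
qed

theorem lemma4p1:
  fixes A B :: "nat set" and X :: "(nat \<Rightarrow> bool) set"
    and f :: "(nat \<Rightarrow> bool) \<Rightarrow> (nat \<Rightarrow> bool)" and n :: real
  assumes "cond_star A B"
    and "infinite X" and "X \<subseteq> D A"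
    and "f ` X \<subseteq> D B"
    and "n > 1"
  shows "\<exists>x\<in>X. \<exists>y\<in>X. x \<noteq> y \<and>
           (d3 (f x) (f y) / d3 x y > n \<or> d3 (f x) (f y) / d3 x y < 1 / n)"
proof -
  obtain k where separated: "\<And>a b. a \<in> A \<Longrightarrow> b \<in> B \<Longrightarrow> k < a \<Longrightarrow> k < b \<Longrightarrow> 2 * b < a \<or> 2 * a < b"
    using cond_star_ratio_two[OF assms(1)] by blast
  obtain N :: nat where "n < 3 ^ N" using real_arch_pow[of 3 n] by auto
  define K where "K = Suc (max k N)"
  obtain x y where xy: "x \<in> X" "y \<in> X" "x \<noteq> y" and agree: "\<forall>i<K. x i = y i \<and> f x i = f y i"
    using infinite_two_agree_below[OF assms(2)] by blast
  show ?thesis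
  proof (cases "f x = f y")
    case True
    then show ?thesis using xy assms(5) by (auto simp: d3_def)
  next
    case False
    have "Delta x y \<in> A" "Delta (f x) (f y) \<in> B"
      using Delta_in_set xy False assms(3,4) by blast+
    moreover have "K \<le> Delta x y" "K \<le> Delta (f x) (f y)"
      using Delta_ge xy(3) False agree by blast+
    ultimately have "2 * Delta (f x) (f y) < Delta x y \<or> 2 * Delta x y < Delta (f x) (f y)"
      using separated unfolding K_def by simp
    moreover have "N < K" unfolding K_def by simp
    ultimately have "N + Delta (f x) (f y) \<le> Delta x y \<or> N + Delta x y \<le> Delta (f x) (f y)"
      using \<open>K \<le> Delta x y\<close> \<open>K \<le> Delta (f x) (f y)\<close> by linarith
    from d3_quotient_far_from_one[OF xy(3) False _ \<open>n < 3 ^ N\<close> this] assms(5)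
    show ?thesis using xy by auto
  qed
qed

end
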